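(* Let $h\in\mathbb N$ and let $F$ be an $h$-flipclass of $\mathfrak S_n$; let $e=|E(F)|$. Then there exists an $h$-flipclass $F'$ of $\mathfrak S_e$ that is isomorphic to $F$. In particular, if $F$ is irreducible, such an $F'$ may be found in $\mathfrak S_{h+1}$.
   Context: $\mathfrak S_n$ is the symmetric group on $[n]$, $T$ its transpositions, $\ell$ the length w.r.t. simple transpositions. The Bruhat graph $B(\mathfrak S_n)$ has an edge $x\xrightarrow{t}y$ iff $yx^{-1}=t\in T$ and $\ell(x)<\ell(y)$. $P_h(u,v)$ is the set of paths $u=x_0\to\cdots\to x_h=v$ of length $h$. Between two fixed vertices there are $0$ or $2$ paths of length $2$; each is the flip of the other. The $i$-th flip operator $f_i$ ($i\in[h-1]$) on $P_h(u,v)$ replaces $x_{i-1}\to x_i\to x_{i+1}$ by its flip; an $h$-flipclass of $\mathfrak S_n$ is an orbit of $\langle f_1,\dots,f_{h-1}\rangle$ on some $P_h(u,v)$. For a path $\Gamma$ with edge labels $t_1,\dots,t_h$, $G(\Gamma)$ is the undirected multigraph whose vertex set is $\{a\in[n]: t_i(a)\ne a \text{ for some } i\}$ with an edge (labelled $i$) between $a$ and $b$ whenever $t_i=(a,b)$. For a flipclass $F$, $E(F)$ denotes the vertex set of $G(\Gamma)$ for any $\Gamma\in F$ (it does not depend on $\Gamma$), and $F$ is irreducible if $G(\Gamma)$ is connected for $\Gamma\in F$ (again independent of $\Gamma$). Isomorphism: for an $h$-flipclass $F$ of $\mathfrak S_n$ and an $h$-flipclass $F'$ of $\mathfrak S_m$,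 an isomorphism from $F$ to $F'$ is a pair $(f,g)$ where $f$ is a bijection from the set of permutations occurring on paths of $F$ onto the set of permutations occurring on paths of $F'$ such that applying $f$ vertexwise gives a bijection $F\to F'$ commuting with the flip operators $f_i$; $g$ is a bijection from the set of transpositions labelling edges of paths of $F$ onto the corresponding set for $F'$, such that whenever $\Gamma\in F$ has label sequence $(t_1,\dots,t_h)$, its image has label sequence $(g(t_1),\dots,g(t_h))$; and $g$ is order-preserving for the lexicographic orders on transpositions (writing transpositions as $(a,b)$ with $a<b$, $(a,b)<(c,d)$ iff $a<c$, or $a=c$ and $b<d$). *)

theory Defs
  imports "HOL-Combinatorics.Permutations"
begin

text \<open>Permutations of [n] = {1..n} are functions nat => nat permuting {1..n}.
  Products are compositions of functions: (x y)(a) = x (y a).\<close>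

definition simple_transps :: "nat \<Rightarrow> (nat \<Rightarrow> nat) set" where
  "simple_transps n = {transpose i (Suc i) | i. 1 \<le> i \<and> Suc i \<le> n}"

definition len :: "nat \<Rightarrow> (nat \<Rightarrow> nat) \<Rightarrow> nat" where
  "len n x = (LEAST k. \<exists>ws. length ws = k \<and> set ws \<subseteq> simple_transps n \<and> foldr (\<circ>) ws id = x)"

definition is_transp :: "(nat \<Rightarrow> nat) \<Rightarrow> bool" where
  "is_transp t \<longleftrightarrow> (\<exists>a b. a \<noteq> b \<and> t = transpose a b)"

definition bedge :: "nat \<Rightarrow> (nat \<Rightarrow> nat) \<Rightarrow> (nat \<Rightarrow> nat) \<Rightarrow> bool" where
  "bedge n x y \<longleftrightarrow> x permutes {1..n} \<and> y permutes {1..n} \<and>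
     is_transp (y \<circ> inv x) \<and> len n x < len n y"

definition paths :: "nat \<Rightarrow> nat \<Rightarrow> (nat \<Rightarrow> nat) \<Rightarrow> (nat \<Rightarrow> nat) \<Rightarrow> (nat \<Rightarrow> nat) list set" where
  "paths n h u v = {p. length p = Suc h \<and> hd p = u \<and> last p = v \<and>
     (\<forall>i<h. bedge n (p ! i) (p ! Suc i))}"

definition labels :: "(nat \<Rightarrow> nat) list \<Rightarrow> (nat \<Rightarrow> nat) list" where
  "labels p = map (\<lambda>i. p ! Suc i \<circ> inv (p ! i)) [0..<length p - 1]"

definition flip_vertex :: "nat \<Rightarrow> (nat \<Rightarrow> nat) \<Rightarrow> (nat \<Rightarrow> nat) \<Rightarrow> (nat \<Rightarrow> nat) \<Rightarrow> (nat \<Rightarrow> nat)" where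
  "flip_vertex n a b c = (THE b'. b' \<noteq> b \<and> bedge n a b' \<and> bedge n b' c)"

definition flip_op :: "nat \<Rightarrow> nat \<Rightarrow> (nat \<Rightarrow> nat) list \<Rightarrow> (nat \<Rightarrow> nat) list" where
  "flip_op n i p = p[i := flip_vertex n (p ! (i - 1)) (p ! i) (p ! Suc i)]"

definition flip_steps :: "nat \<Rightarrow> nat \<Rightarrow> (nat \<Rightarrow> nat) \<Rightarrow> (nat \<Rightarrow> nat) \<Rightarrow>
    ((nat \<Rightarrow> nat) list \<times> (nat \<Rightarrow> nat) list) set" where
  "flip_steps n h u v = {(p, q). p \<in> paths n h u v \<and> (\<exists>i. 1 \<le> i \<and> i < h \<and> q = flip_op n i p)}"

text \<open>h-flipclass of S_n: orbit of the group generated by f_1..f_{h-1} on some P_h(u,v).\<close>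
definition flipclass :: "nat \<Rightarrow> nat \<Rightarrow> (nat \<Rightarrow> nat) list set \<Rightarrow> bool" where
  "flipclass n h F \<longleftrightarrow> (\<exists>u v p. p \<in> paths n h u v \<and>
     F = {q. (p, q) \<in> (flip_steps n h u v \<union> (flip_steps n h u v)\<inverse>)\<^sup>*})"

text \<open>Vertex set of G(Gamma), and E(F) = that set for (any) Gamma in F.\<close>
definition Gverts :: "(nat \<Rightarrow> nat) list \<Rightarrow> nat set" where
  "Gverts p = {a. \<exists>t \<in> set (labels p). t a \<noteq> a}"

definition EF :: "(nat \<Rightarrow> nat) list set \<Rightarrow> nat set" where
  "EF F = Gverts (SOME p. p \<in> F)"

definition Gconnected :: "(nat \<Rightarrow> nat) list \<Rightarrow> bool" where
  "Gconnected p \<longleftrightarrow> (\<forall>a \<in> Gverts p. \<forall>b \<in> Gverts p.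
     (a, b) \<in> {(x, y). x \<noteq> y \<and> transpose x y \<in> set (labels p)}\<^sup>*)"

definition irreducible_fc :: "(nat \<Rightarrow> nat) list set \<Rightarrow> bool" where
  "irreducible_fc F \<longleftrightarrow> (\<exists>p \<in> F. Gconnected p)"

definition fc_verts :: "(nat \<Rightarrow> nat) list set \<Rightarrow> (nat \<Rightarrow> nat) set" where
  "fc_verts F = (\<Union>p \<in> F. set p)"

definition fc_labels :: "(nat \<Rightarrow> nat) list set \<Rightarrow> (nat \<Rightarrow> nat) set" where
  "fc_labels F = (\<Union>p \<in> F. set (labels p))"

definition tpair :: "(nat \<Rightarrow> nat) \<Rightarrow> nat \<times> nat" where
  "tpair t = (Min {a. t a \<noteq> a}, Max {a. t a \<noteq> a})"

definition tlex_less :: "(nat \<Rightarrow> nat) \<Rightarrow> (nat \<Rightarrow> nat) \<Rightarrow> bool" where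
  "tlex_less t s \<longleftrightarrow> fst (tpair t) < fst (tpair s) \<or>
     (fst (tpair t) = fst (tpair s) \<and> snd (tpair t) < snd (tpair s))"

definition fc_iso :: "nat \<Rightarrow> nat \<Rightarrow> nat \<Rightarrow> (nat \<Rightarrow> nat) list set \<Rightarrow> (nat \<Rightarrow> nat) list set \<Rightarrow> bool" where
  "fc_iso n m h F F' \<longleftrightarrow> (\<exists>f g.
     bij_betw f (fc_verts F) (fc_verts F') \<and>
     bij_betw (map f) F F' \<and>
     (\<forall>p \<in> F. \<forall>i. 1 \<le> i \<and> i < h \<longrightarrow> map f (flip_op n i p) = flip_op m i (map f p)) \<and>
     bij_betw g (fc_labels F) (fc_labels F') \<and>
     (\<forall>p \<in> F. labels (map f p) = map g (labels p)) \<and>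
     (\<forall>t \<in> fc_labels F. \<forall>s \<in> fc_labels F. tlex_less t s \<longrightarrow> tlex_less (g t) (g s)))"

end

(*
  All vertices of a flipclass F with source u lie in the coset {sigma o u | sigma permutes E}
  for E = E(F), because every edge label is a transposition of two points of E. Replacing
  positions in u^-1(E) and values in E by their ranks maps this coset injectively into the
  permutations of {1..|E|} (and of {1..m} for every m >= |E|), and sends the edge
  x -> (a b) o x to the edge labelled (rank a, rank b). Since the Coxeter length equals the
  number of inversions, such an edge goes up exactly when x^-1 keeps a and b in order, which
  ranks preserve; so Bruhat paths are mapped to Bruhat paths and labels are relabelled in an
  order-preserving way. The two length-two paths between given endpoints are each other's
  flip, hence the relabelling commutes with the flip operators and maps F onto a flipclass.
  If F is irreducible, G(Gamma) is a connected graph on |E| vertices with at most h edges,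
  so |E| <= h + 1.
*)
theory Submission
  imports Defs
begin

section \<open>Inversions and Coxeter length\<close>

definition inversions :: "nat \<Rightarrow> (nat \<Rightarrow> nat) \<Rightarrow> (nat \<times> nat) set" where
  "inversions n w = {(i, j). i \<in> {1..n} \<and> j \<in> {1..n} \<and> i < j \<and> w j < w i}"

definition inversion_count :: "nat \<Rightarrow> (nat \<Rightarrow> nat) \<Rightarrow> nat" where
  "inversion_count n w = card (inversions n w)"

lemma finite_inversions: "finite (inversions n w)"
  by (rule finite_subset[of _ "{1..n} \<times> {1..n}"]) (auto simp: inversions_def)

lemma inversion_count_id [simp]: "inversion_count n id = 0"
proof -
  have "inversions n id = {}" by (auto simp: inversions_def)
  then show ?thesis by (simp add: inversion_count_def)
qed

lemma inversion_count_less_comp_transpose: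
  assumes ab: "a < b" "a \<in> {1..n}" "b \<in> {1..n}" and w: "w a < w b"
  shows "inversion_count n w < inversion_count n (w \<circ> transpose a b)"
proof -
  \<comment> \<open>An injection of the old inversions into the new ones other than (a, b): pairs (a, j)
      and (i, b) with the other entry strictly between a and b stay, all others are moved by the
      transposition.\<close>
  define g where "g = (\<lambda>(i, j). if (i = a \<and> a < j \<and> j < b) \<or> (j = b \<and> a < i \<and> i < b) then (i, j)
      else (transpose a b i, transpose a b j))"
  have "inj_on g (inversions n w)"
    by (rule inj_onI) (use ab in \<open>auto simp: g_def inversions_def transpose_def split: if_splits\<close>)
  moreover have "g ` inversions n w \<subseteq> inversions n (w \<circ> transpose a b) - {(a, b)}"
    using ab w by (auto simp: g_def inversions_def transpose_def split: if_splits)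
  moreover have "(a, b) \<in> inversions n (w \<circ> transpose a b)"
    using ab w by (auto simp: inversions_def)
  ultimately show ?thesis
    unfolding inversion_count_def
    by (metis card_Diff1_less card_image card_mono finite_Diff finite_inversions
        order_le_less_trans)
qed

lemma transpose_adjacent_less:
  assumes "k < l" "(k, l) \<noteq> (i, Suc i)"
  shows "transpose i (Suc i) k < transpose i (Suc i) l"
  using assms by (auto simp: transpose_def)

lemma inversion_count_comp_adjacent:
  assumes i: "i \<in> {1..n}" "Suc i \<in> {1..n}" and w: "w i < w (Suc i)"
  shows "inversion_count n (w \<circ> transpose i (Suc i)) = Suc (inversion_count n w)"
proof -
  let ?s = "transpose i (Suc i)"
  have s_in: "Suc 0 \<le> ?s k \<longleftrightarrow> Suc 0 \<le> k" "?s k \<le> n \<longleftrightarrow> k \<le> n" for k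
    using i by (auto simp: transpose_def)
  have new: "(i, Suc i) \<in> inversions n (w \<circ> ?s)"
    using i w by (simp add: inversions_def)
  have "inversions n (w \<circ> ?s) - {(i, Suc i)} = map_prod ?s ?s ` inversions n w"
  proof (intro equalityI subsetI)
    fix p assume p: "p \<in> inversions n (w \<circ> ?s) - {(i, Suc i)}"
    then obtain k l where "p = (k, l)" by (cases p)
    with p have "(?s k, ?s l) \<in> inversions n w"
      using transpose_adjacent_less[of k l i] by (auto simp: inversions_def s_in)
    then show "p \<in> map_prod ?s ?s ` inversions n w"
      by (rule rev_image_eqI) (simp add: \<open>p = (k, l)\<close>)
  next
    fix p assume "p \<in> map_prod ?s ?s ` inversions n w"
    then obtain k l where kl: "(k, l) \<in> inversions n w" "p = (?s k, ?s l)" by auto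
    have "(k, l) \<noteq> (i, Suc i)" using kl(1) w by (auto simp: inversions_def)
    then show "p \<in> inversions n (w \<circ> ?s) - {(i, Suc i)}"
      using kl transpose_adjacent_less[of k l i]
      by (auto simp: inversions_def s_in transpose_eq_iff)
  qed
  moreover have "inj_on (map_prod ?s ?s) (inversions n w)"
    by (rule inj_onI) (auto dest: transpose_eq_imp_eq)
  ultimately show ?thesis
    unfolding inversion_count_def using new finite_inversions
    by (metis card.insert card_image finite_Diff insert_Diff Diff_iff singletonI)
qed

lemma inversion_count_comp_adjacent_le:
  assumes i: "i \<in> {1..n}" "Suc i \<in> {1..n}" and w: "w i \<noteq> w (Suc i)"
  shows "inversion_count n (w \<circ> transpose i (Suc i)) \<le> Suc (inversion_count n w)"
proof (cases "w i < w (Suc i)")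
  case True
  then show ?thesis using inversion_count_comp_adjacent[OF i] by simp
next
  case False
  let ?w = "w \<circ> transpose i (Suc i)"
  have "inversion_count n (?w \<circ> transpose i (Suc i)) = Suc (inversion_count n ?w)"
    by (rule inversion_count_comp_adjacent[OF i]) (use False w in simp)
  then show ?thesis by (simp add: comp_assoc)
qed

lemma simple_transpsE:
  assumes "s \<in> simple_transps n"
  obtains i where "s = transpose i (Suc i)" "i \<in> {1..n}" "Suc i \<in> {1..n}"
  using assms unfolding simple_transps_def by auto

lemma foldr_comp_Cons: "foldr (\<circ>) (s # ws) id = s \<circ> foldr (\<circ>) ws id"
  by simp

lemma word_permutes:
  "set ws \<subseteq> simple_transps n \<Longrightarrow> foldr (\<circ>) ws id permutes {1..n}"
proof (induction ws)
  case Nil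
  show ?case by (simp add: id_def[symmetric])
next
  case (Cons s ws)
  then obtain i where "s = transpose i (Suc i)" "i \<in> {1..n}" "Suc i \<in> {1..n}"
    by (auto elim: simple_transpsE)
  then have "s permutes {1..n}" by (simp add: permutes_swap_id)
  moreover have "foldr (\<circ>) ws id permutes {1..n}" using Cons by (intro Cons.IH) simp
  ultimately show ?case unfolding foldr_comp_Cons by (rule permutes_compose[rotated])
qed

lemma inversion_count_inv_word_le:
  "set ws \<subseteq> simple_transps n \<Longrightarrow> inversion_count n (inv (foldr (\<circ>) ws id)) \<le> length ws"
proof (induction ws)
  case Nil
  show ?case by (simp add: id_def[symmetric])
next
  case (Cons s ws)
  let ?y = "foldr (\<circ>) ws id"
  obtain i where s: "s = transpose i (Suc i)" "i \<in> {1..n}" "Suc i \<in> {1..n}"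
    using Cons.prems by (auto elim: simple_transpsE)
  have y: "?y permutes {1..n}" by (rule word_permutes) (use Cons.prems in simp)
  then have "inv (s \<circ> ?y) = inv ?y \<circ> s"
    by (simp add: o_inv_distrib permutes_bij s(1))
  moreover have "inv ?y i \<noteq> inv ?y (Suc i)"
    by (simp add: inj_eq[OF permutes_inj[OF permutes_inv[OF y]]])
  ultimately have "inversion_count n (inv (s \<circ> ?y)) \<le> Suc (inversion_count n (inv ?y))"
    using inversion_count_comp_adjacent_le[OF s(2,3)] s(1) by simp
  moreover have "inversion_count n (inv ?y) \<le> length ws" by (rule Cons.IH) (use Cons.prems in simp)
  ultimately show ?case unfolding foldr_comp_Cons length_Cons by linarith
qed

lemma permutes_inversion_exists:
  fixes w :: "nat \<Rightarrow> nat"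
  assumes w: "w permutes {1..n}" and "w \<noteq> id"
  shows "\<exists>i j. i \<in> {1..n} \<and> j \<in> {1..n} \<and> i < j \<and> w j < w i"
proof -
  \<comment> \<open>The least point i moved by w is moved upwards, and its preimage k lies beyond it.\<close>
  have ex: "\<exists>i. w i \<noteq> i" using \<open>w \<noteq> id\<close> by (auto simp: fun_eq_iff)
  define i where "i = (LEAST i. w i \<noteq> i)"
  have wi: "w i \<noteq> i" unfolding i_def using ex by (rule LeastI_ex[where P = "\<lambda>i. w i \<noteq> i"])
  have below: "w j = j" if "j < i" for j
    using that not_less_Least unfolding i_def by blast
  have "w i > i"
  proof (rule ccontr)
    assume "\<not> w i > i"
    then have "w (w i) = w i" using below wi by simp
    then show False using wi permutes_inj[OF w] by (auto dest: injD)
  qed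
  obtain k where k: "w k = i" using w by (metis permutes_surj surj_f_inv_f)
  have "i \<in> {1..n}" using wi permutes_not_in[OF w] by blast
  moreover have "k \<noteq> i" using k wi by auto
  then have "k \<in> {1..n}" using k permutes_not_in[OF w] by fastforce
  moreover have "i < k" using below[of k] k \<open>k \<noteq> i\<close> by (cases "k < i") auto
  ultimately show ?thesis using k \<open>w i > i\<close> by blast
qed

lemma descent_between:
  fixes w :: "nat \<Rightarrow> nat"
  shows "i < j \<Longrightarrow> w j < w i \<Longrightarrow> \<exists>k. i \<le> k \<and> k < j \<and> w (Suc k) < w k"
proof (induction j)
  case 0
  then show ?case by simp
next
  case (Suc j)
  show ?case
  proof (cases "w (Suc j) < w j")
    case True
    then show ?thesis using Suc.prems by (intro exI[of _ j]) auto
  next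
    case False
    with Suc.prems have "i < j" "w j < w i" by (auto simp: less_Suc_eq)
    then show ?thesis using Suc.IH less_SucI by blast
  qed
qed

lemma exists_word_inversion_count:
  "x permutes {1..n} \<Longrightarrow>
     \<exists>ws. length ws = inversion_count n (inv x) \<and> set ws \<subseteq> simple_transps n \<and>
       foldr (\<circ>) ws id = x"
proof (induction "inversion_count n (inv x)" arbitrary: x rule: less_induct)
  case less
  show ?case
  proof (cases "x = id")
    case True
    then show ?thesis by (intro exI[of _ "[]"]) simp
  next
    case False
    let ?w = "inv x"
    have w: "?w permutes {1..n}" using less.prems by (rule permutes_inv)
    have "?w \<noteq> id"
    proof
      assume "?w = id"
      then have "inv ?w = id" by simp
      then show False using False inv_inv_eq[OF permutes_bij[OF less.prems]] by simp
    qed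
    then obtain i j where ij: "i \<in> {1..n}" "j \<in> {1..n}" "i < j" "?w j < ?w i"
      using permutes_inversion_exists[OF w] by blast
    then obtain k where "i \<le> k" "k < j" "?w (Suc k) < ?w k"
      using descent_between[of i j ?w] by blast
    with ij have k: "k \<in> {1..n}" "Suc k \<in> {1..n}" "?w (Suc k) < ?w k" by auto
    define s where "s = transpose k (Suc k)"
    have s: "s \<in> simple_transps n" using k unfolding s_def simple_transps_def by auto
    have inv_sx: "inv (s \<circ> x) = ?w \<circ> s"
      by (simp add: s_def o_inv_distrib permutes_bij[OF less.prems])
    have "inversion_count n ((?w \<circ> s) \<circ> s) = Suc (inversion_count n (?w \<circ> s))"
      unfolding s_def by (rule inversion_count_comp_adjacent[OF k(1,2)]) (use k(3) in simp)
    then have count_sx: "inversion_count n ?w = Suc (inversion_count n (inv (s \<circ> x)))"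
      unfolding inv_sx by (simp add: s_def comp_assoc)
    have "s \<circ> x permutes {1..n}"
      by (rule permutes_compose[OF less.prems]) (use k in \<open>simp add: s_def permutes_swap_id\<close>)
    then obtain ws where ws: "length ws = inversion_count n (inv (s \<circ> x))"
      "set ws \<subseteq> simple_transps n" "foldr (\<circ>) ws id = s \<circ> x"
      using less.hyps[of "s \<circ> x"] count_sx by auto
    have "foldr (\<circ>) (s # ws) id = x" using ws(3) by (simp add: s_def comp_assoc[symmetric])
    then show ?thesis using ws count_sx s by (intro exI[of _ "s # ws"]) simp
  qed
qed

lemma len_eq_inversion_count:
  assumes "x permutes {1..n}"
  shows "len n x = inversion_count n (inv x)"
proof -
  let ?P = "\<lambda>k. \<exists>ws. length ws = k \<and> set ws \<subseteq> simple_transps n \<and> foldr (\<circ>) ws id = x"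
  have P: "?P (inversion_count n (inv x))" using exists_word_inversion_count[OF assms] .
  then have "len n x \<le> inversion_count n (inv x)" unfolding len_def by (rule Least_le)
  moreover have "?P (len n x)" unfolding len_def using P by (rule LeastI)
  then obtain ws where "length ws = len n x" "set ws \<subseteq> simple_transps n" "foldr (\<circ>) ws id = x"
    by blast
  then have "inversion_count n (inv x) \<le> len n x" using inversion_count_inv_word_le[of ws n] by simp
  ultimately show ?thesis by simp
qed

definition in_order :: "(nat \<Rightarrow> nat) \<Rightarrow> nat \<Rightarrow> nat \<Rightarrow> bool" where
  "in_order w a b \<longleftrightarrow> (a < b \<longleftrightarrow> w a < w b)"

lemma in_order_commute:
  assumes "a \<noteq> b" "inj w"
  shows "in_order w b a \<longleftrightarrow> in_order w a b"
proof -
  have "w a \<noteq> w b" using assms by (simp add: inj_eq)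
  then show ?thesis using assms(1) by (auto simp: in_order_def)
qed

lemma inversion_count_less_comp_transpose_iff:
  assumes w: "inj w" and ab: "a < b" "a \<in> {1..n}" "b \<in> {1..n}"
  shows "inversion_count n w < inversion_count n (w \<circ> transpose a b) \<longleftrightarrow> w a < w b"
proof
  assume less: "inversion_count n w < inversion_count n (w \<circ> transpose a b)"
  show "w a < w b"
  proof (rule ccontr)
    assume "\<not> w a < w b"
    moreover have "w a \<noteq> w b" using w ab(1) by (simp add: inj_eq)
    ultimately have "(w \<circ> transpose a b) a < (w \<circ> transpose a b) b" by simp
    then have "inversion_count n (w \<circ> transpose a b) < inversion_count n w"
      using inversion_count_less_comp_transpose[OF ab, of "w \<circ> transpose a b"]
      by (simp add: comp_assoc)
    with less show False by simp
  qed
qed (rule inversion_count_less_comp_transpose[OF ab])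

lemma len_less_transpose_iff:
  assumes x: "x permutes {1..n}" and ab: "a \<in> {1..n}" "b \<in> {1..n}" "a \<noteq> b"
  shows "len n x < len n (transpose a b \<circ> x) \<longleftrightarrow> in_order (inv x) a b"
proof -
  have tx: "transpose a b \<circ> x permutes {1..n}"
    using x ab by (intro permutes_compose permutes_swap_id)
  have inv_tx: "inv (transpose a b \<circ> x) = inv x \<circ> transpose a b"
    by (simp add: o_inv_distrib permutes_bij[OF x])
  have inj: "inj (inv x)" using permutes_inj[OF permutes_inv[OF x]] .
  have "len n x < len n (transpose a b \<circ> x) \<longleftrightarrow>
      inversion_count n (inv x) < inversion_count n (inv x \<circ> transpose a b)"
    by (simp add: len_eq_inversion_count[OF x] len_eq_inversion_count[OF tx] inv_tx)
  also have "\<dots> \<longleftrightarrow> in_order (inv x) a b"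
  proof (cases "a < b")
    case True
    then show ?thesis
      using inversion_count_less_comp_transpose_iff[OF inj True ab(1,2)] by (simp add: in_order_def)
  next
    case False
    then have "b < a" using ab(3) by simp
    then show ?thesis
      using inversion_count_less_comp_transpose_iff[OF inj \<open>b < a\<close> ab(2,1)]
        in_order_commute[OF ab(3) inj]
      by (simp add: in_order_def transpose_commute)
  qed
  finally show ?thesis .
qed

section \<open>Edges of the Bruhat graph\<close>

lemma comp_permutes_cancel:
  assumes "a permutes S" "f \<circ> a = g \<circ> a"
  shows "f = g"
  by (metis assms comp_assoc comp_id permutes_inv_o(1))

lemma bedge_transpose_iff:
  assumes x: "x permutes {1..n}" and ab: "a \<in> {1..n}" "b \<in> {1..n}" "a \<noteq> b"
  shows "bedge n x (transpose a b \<circ> x) \<longleftrightarrow> in_order (inv x) a b"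
proof -
  have "transpose a b \<circ> x \<circ> inv x = transpose a b"
    by (simp add: comp_assoc permutes_inv_o[OF x])
  then have "is_transp (transpose a b \<circ> x \<circ> inv x)"
    using ab(3) by (auto simp: is_transp_def)
  moreover have "transpose a b \<circ> x permutes {1..n}"
    using x ab by (intro permutes_compose permutes_swap_id)
  ultimately show ?thesis
    unfolding bedge_def using x len_less_transpose_iff[OF x ab] by blast
qed

lemma bedgeE:
  assumes "bedge n x y"
  obtains a b where "a \<noteq> b" "a \<in> {1..n}" "b \<in> {1..n}" "y = transpose a b \<circ> x"
    "in_order (inv x) a b"
proof -
  have x: "x permutes {1..n}" and y: "y permutes {1..n}" and "is_transp (y \<circ> inv x)"
    using assms by (auto simp: bedge_def)
  then obtain a b where ab: "a \<noteq> b" "y \<circ> inv x = transpose a b" by (auto simp: is_transp_def)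
  have "y = y \<circ> inv x \<circ> x" by (simp add: comp_assoc permutes_inv_o(2)[OF x])
  then have yx: "y = transpose a b \<circ> x" by (simp add: ab(2))
  have "transpose a b permutes {1..n}"
    using ab(2) permutes_compose[OF permutes_inv[OF x] y] by simp
  then have "a \<in> {1..n}" "b \<in> {1..n}"
    using ab(1) permutes_not_in[of "transpose a b" "{1..n}"] by fastforce+
  with ab(1) yx show ?thesis
    using that assms bedge_transpose_iff[OF x] by blast
qed

lemma bedge_bedgeE:
  assumes ab: "bedge n a b" and bc: "bedge n b c"
  obtains p q r t where "p \<noteq> q" "r \<noteq> t" "transpose p q \<noteq> transpose r t"
    "{p, q, r, t} \<subseteq> {1..n}" "b = transpose p q \<circ> a" "c = transpose r t \<circ> b"
    "in_order (inv a) p q" "in_order (inv b) r t"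
proof -
  obtain p q where pq: "p \<noteq> q" "p \<in> {1..n}" "q \<in> {1..n}" "b = transpose p q \<circ> a"
    "in_order (inv a) p q"
    using ab by (rule bedgeE)
  obtain r t where rt: "r \<noteq> t" "r \<in> {1..n}" "t \<in> {1..n}" "c = transpose r t \<circ> b"
    "in_order (inv b) r t"
    using bc by (rule bedgeE)
  have "transpose p q \<noteq> transpose r t"
  proof
    assume "transpose p q = transpose r t"
    then have "c = a" using pq(4) rt(4) by (simp add: comp_assoc[symmetric])
    then show False using ab bc by (simp add: bedge_def)
  qed
  with pq rt show ?thesis using that by blast
qed

definition supp :: "(nat \<Rightarrow> nat) \<Rightarrow> nat set" where
  "supp f = {z. f z \<noteq> z}"

lemma supp_transpose: "a \<noteq> b \<Longrightarrow> supp (transpose a b) = {a, b}"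
  by (auto simp: supp_def transpose_def)

lemma transpose_eq_transpose_iff:
  assumes "a \<noteq> b"
  shows "transpose a b = transpose c d \<longleftrightarrow> (a = c \<and> b = d) \<or> (a = d \<and> b = c)"
proof
  assume "transpose a b = transpose c d"
  then have "transpose c d a = b" by (metis transpose_apply_first)
  then show "(a = c \<and> b = d) \<or> (a = d \<and> b = c)" using assms by (auto simp: transpose_eq_iff)
qed (auto simp: transpose_commute)

lemma supp_transpose_comp:
  assumes "a \<noteq> b" "c \<noteq> d" "transpose a b \<noteq> transpose c d"
  shows "supp (transpose c d \<circ> transpose a b) = {a, b, c, d}"
  using assms transpose_eq_transpose_iff[of a b c d] by (auto simp: supp_def transpose_def)

lemma in_order_transpose_cong:
  assumes "transpose p q = transpose x y" "p \<noteq> q" "inj w"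
  shows "in_order w p q \<longleftrightarrow> in_order w x y"
  using assms transpose_eq_transpose_iff[of p q x y] in_order_commute[of x y w] by auto

lemma bedge_supp:
  assumes "bedge n a b"
  obtains \<alpha> \<beta> where "\<alpha> \<noteq> \<beta>" "b = transpose \<alpha> \<beta> \<circ> a" "b \<circ> inv a = transpose \<alpha> \<beta>"
    "supp (b \<circ> inv a) = {\<alpha>, \<beta>}"
proof -
  obtain \<alpha> \<beta> where ab: "\<alpha> \<noteq> \<beta>" "b = transpose \<alpha> \<beta> \<circ> a"
    using assms by (rule bedgeE)
  moreover have "a permutes {1..n}" using assms by (simp add: bedge_def)
  ultimately have "b \<circ> inv a = transpose \<alpha> \<beta>"
    by (simp add: comp_assoc permutes_inv_o)
  with ab show ?thesis by (intro that) (simp_all add: supp_transpose)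
qed

lemma supp_comp_two_bedges:
  assumes "bedge n a b" "bedge n b c"
  shows "supp (b \<circ> inv a) \<union> supp (c \<circ> inv b) = supp (c \<circ> inv a)"
proof -
  obtain p q r t where pqrt: "p \<noteq> q" "r \<noteq> t" "transpose p q \<noteq> transpose r t"
    "b = transpose p q \<circ> a" "c = transpose r t \<circ> b"
    using assms by (rule bedge_bedgeE)
  have a: "a permutes {1..n}" and b: "b permutes {1..n}" using assms(1) by (auto simp: bedge_def)
  have ba: "b \<circ> inv a = transpose p q"
    using pqrt(4) by (simp add: comp_assoc permutes_inv_o[OF a])
  have cb: "c \<circ> inv b = transpose r t"
    using pqrt(5) by (simp add: comp_assoc permutes_inv_o[OF b])
  have ca: "c \<circ> inv a = transpose r t \<circ> transpose p q"
    using pqrt(5) ba by (simp add: comp_assoc)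
  show ?thesis
    unfolding ba cb ca using pqrt(1-3) by (auto simp: supp_transpose supp_transpose_comp)
qed

section \<open>Paths of length two and flips\<close>

lemma midpointE:
  assumes "bedge n a b'" "bedge n b' c" "c = \<pi> \<circ> a"
  obtains p q r t where "p \<noteq> q" "r \<noteq> t" "transpose p q \<noteq> transpose r t"
    "b' = transpose p q \<circ> a" "transpose r t \<circ> transpose p q = \<pi>"
proof -
  obtain p q r t where pqrt: "p \<noteq> q" "r \<noteq> t" "transpose p q \<noteq> transpose r t"
    "b' = transpose p q \<circ> a" "c = transpose r t \<circ> b'"
    using assms(1,2) by (rule bedge_bedgeE)
  have "a permutes {1..n}" using assms(1) by (simp add: bedge_def)
  moreover have "(transpose r t \<circ> transpose p q) \<circ> a = \<pi> \<circ> a"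
    using pqrt(4,5) assms(3) by (simp add: comp_assoc)
  ultimately have "transpose r t \<circ> transpose p q = \<pi>" by (rule comp_permutes_cancel)
  with pqrt show ?thesis using that by blast
qed

lemma transposition_factor_disjoint:
  fixes \<alpha> \<beta> \<gamma> \<delta> :: nat
  assumes d: "distinct [\<alpha>, \<beta>, \<gamma>, \<delta>]" and "p \<noteq> q" "r \<noteq> t" "transpose p q \<noteq> transpose r t"
    and e: "transpose r t \<circ> transpose p q = transpose \<gamma> \<delta> \<circ> transpose \<alpha> \<beta>"
  shows "transpose p q = transpose \<alpha> \<beta> \<or> transpose p q = transpose \<gamma> \<delta>"
proof (rule ccontr)
  let ?\<pi> = "transpose \<gamma> \<delta> \<circ> transpose \<alpha> \<beta>"
  have "transpose \<alpha> \<beta> \<noteq> transpose \<gamma> \<delta>"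
    using d transpose_eq_transpose_iff[of \<alpha> \<beta> \<gamma> \<delta>] by auto
  then have "supp ?\<pi> = {\<alpha>, \<beta>, \<gamma>, \<delta>}" using d by (simp add: supp_transpose_comp)
  moreover have "supp (transpose r t \<circ> transpose p q) = {p, q, r, t}"
    using assms(2-4) by (rule supp_transpose_comp)
  ultimately have "{p, q, r, t} = {\<alpha>, \<beta>, \<gamma>, \<delta>}" using e by simp
  then have "p \<in> {\<alpha>, \<beta>, \<gamma>, \<delta>}" "q \<in> {\<alpha>, \<beta>, \<gamma>, \<delta>}" by blast+
  moreover assume "\<not> ?thesis"
  ultimately have cross: "(p \<in> {\<alpha>, \<beta>} \<and> q \<in> {\<gamma>, \<delta>}) \<or> (p \<in> {\<gamma>, \<delta>} \<and> q \<in> {\<alpha>, \<beta>})"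
    using \<open>p \<noteq> q\<close> by (auto simp: transpose_commute)
  \<comment> \<open>A crossing factor would make the other factor move three points.\<close>
  have "transpose r t = ?\<pi> \<circ> transpose p q"
    using arg_cong[OF e, of "\<lambda>f. f \<circ> transpose p q"] by (simp add: comp_assoc)
  moreover have "(?\<pi> \<circ> transpose p q) \<alpha> \<noteq> \<alpha>" "(?\<pi> \<circ> transpose p q) \<beta> \<noteq> \<beta>"
    "(?\<pi> \<circ> transpose p q) \<gamma> \<noteq> \<gamma>"
    using cross d by (auto simp: transpose_def)
  ultimately have "{\<alpha>, \<beta>, \<gamma>} \<subseteq> supp (transpose r t)" by (auto simp: supp_def)
  then show False using supp_transpose[OF \<open>r \<noteq> t\<close>] d by auto
qed

lemma transposition_factor_overlapping:
  fixes x y z :: nat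
  assumes d: "distinct [x, y, z]" and "p \<noteq> q" "r \<noteq> t" "transpose p q \<noteq> transpose r t"
    and e: "transpose r t \<circ> transpose p q = transpose y z \<circ> transpose x y"
  shows "transpose p q \<in> {transpose x y, transpose y z, transpose x z}"
proof -
  have "transpose x y \<noteq> transpose y z"
    using d transpose_eq_transpose_iff[of x y y z] by auto
  then have "supp (transpose y z \<circ> transpose x y) = {x, y, z}"
    using d by (auto simp: supp_transpose_comp)
  moreover have "supp (transpose r t \<circ> transpose p q) = {p, q, r, t}"
    using assms(2-4) by (rule supp_transpose_comp)
  ultimately have "{p, q, r, t} = {x, y, z}" using e by simp
  then have "p \<in> {x, y, z}" "q \<in> {x, y, z}" by auto
  then show ?thesis using \<open>p \<noteq> q\<close> by (auto simp: transpose_commute)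
qed

lemma ex1_flip_disjoint:
  assumes a: "a permutes {1..n}" and S: "{\<alpha>, \<beta>, \<gamma>, \<delta>} \<subseteq> {1..n}"
    and d: "distinct [\<alpha>, \<beta>, \<gamma>, \<delta>]"
    and ord: "in_order (inv a) \<alpha> \<beta>" "in_order (inv a \<circ> transpose \<alpha> \<beta>) \<gamma> \<delta>"
  shows "\<exists>!b'. b' \<noteq> transpose \<alpha> \<beta> \<circ> a \<and> bedge n a b' \<and>
    bedge n b' (transpose \<gamma> \<delta> \<circ> transpose \<alpha> \<beta> \<circ> a)"
proof -
  let ?b = "transpose \<alpha> \<beta> \<circ> a" and ?d = "transpose \<gamma> \<delta> \<circ> a"
  let ?c = "transpose \<gamma> \<delta> \<circ> transpose \<alpha> \<beta> \<circ> a"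
  have tt: "transpose \<gamma> \<delta> \<circ> transpose \<alpha> \<beta> = transpose \<alpha> \<beta> \<circ> transpose \<gamma> \<delta>"
    using d by (auto simp: fun_eq_iff transpose_def)
  have d_perm: "?d permutes {1..n}" using a S by (auto intro!: permutes_compose permutes_swap_id)
  have inv_d: "inv ?d = inv a \<circ> transpose \<gamma> \<delta>"
    by (simp add: o_inv_distrib permutes_bij[OF a])
  have "bedge n a ?d"
    using ord(2) d S by (simp add: bedge_transpose_iff[OF a] in_order_def)
  moreover have "bedge n ?d ?c"
    using ord(1) d S tt bedge_transpose_iff[OF d_perm, of \<alpha> \<beta>]
    by (simp add: inv_d in_order_def comp_assoc)
  moreover have "?d \<noteq> ?b"
  proof
    assume "?d = ?b"
    then have "transpose \<gamma> \<delta> = transpose \<alpha> \<beta>" by (rule comp_permutes_cancel[OF a])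
    then show False using d transpose_eq_transpose_iff[of \<gamma> \<delta> \<alpha> \<beta>] by auto
  qed
  moreover have "b' = ?d" if b': "b' \<noteq> ?b" "bedge n a b'" "bedge n b' ?c" for b'
  proof -
    obtain p q r t where pqrt: "p \<noteq> q" "r \<noteq> t" "transpose p q \<noteq> transpose r t"
      "b' = transpose p q \<circ> a" "transpose r t \<circ> transpose p q = transpose \<gamma> \<delta> \<circ> transpose \<alpha> \<beta>"
      by (rule midpointE[OF b'(2,3) refl])
    then show ?thesis using transposition_factor_disjoint[OF d pqrt(1-3,5)] b'(1) by auto
  qed
  ultimately show ?thesis by blast
qed

lemma ex1_flip_overlapping:
  fixes x y z :: nat
  assumes a: "a permutes {1..n}" and S: "{x, y, z} \<subseteq> {1..n}" and d: "distinct [x, y, z]"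
    and ord: "in_order (inv a) x y" "in_order (inv a \<circ> transpose x y) y z"
  shows "\<exists>!b'. b' \<noteq> transpose x y \<circ> a \<and> bedge n a b' \<and>
    bedge n b' (transpose y z \<circ> transpose x y \<circ> a)"
proof -
  let ?w = "inv a" and ?b = "transpose x y \<circ> a" and ?c = "transpose y z \<circ> transpose x y \<circ> a"
  let ?u = "transpose y z \<circ> a" and ?v = "transpose x z \<circ> a"
  have u: "?u permutes {1..n}" and v: "?v permutes {1..n}"
    using a S by (auto intro!: permutes_compose permutes_swap_id)
  have inv_u: "inv ?u = ?w \<circ> transpose y z" and inv_v: "inv ?v = ?w \<circ> transpose x z"
    by (simp_all add: o_inv_distrib permutes_bij[OF a])
  have c_u: "?c = transpose x z \<circ> ?u" and c_v: "?c = transpose x y \<circ> ?v"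
    using d by (auto simp: fun_eq_iff transpose_def)
  have S_u: "bedge n a ?u \<and> bedge n ?u ?c \<longleftrightarrow>
      in_order ?w y z \<and> in_order (?w \<circ> transpose y z) x z"
    using S d by (simp add: c_u bedge_transpose_iff[OF a] bedge_transpose_iff[OF u] inv_u)
  have S_v: "bedge n a ?v \<and> bedge n ?v ?c \<longleftrightarrow>
      in_order ?w x z \<and> in_order (?w \<circ> transpose x z) x y"
    using S d by (simp add: c_v bedge_transpose_iff[OF a] bedge_transpose_iff[OF v] inv_v)
  \<comment> \<open>Which of the two other midpoints lies on a path depends only on the relative order
      of the values of ?w at x, y, z, and a finite check shows that exactly one does.\<close>
  have "?w x \<noteq> ?w y" "?w y \<noteq> ?w z" "?w x \<noteq> ?w z"
    using d permutes_inj[OF permutes_inv[OF a]] by (auto simp: inj_eq)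
  then have exclusive: "(in_order ?w y z \<and> in_order (?w \<circ> transpose y z) x z) \<longleftrightarrow>
      \<not> (in_order ?w x z \<and> in_order (?w \<circ> transpose x z) x y)"
    using ord d by (simp add: in_order_def) arith
  have "transpose y z \<noteq> transpose x y" "transpose x z \<noteq> transpose x y"
    using d transpose_eq_transpose_iff[of y z x y] transpose_eq_transpose_iff[of x z x y] by auto
  then have "?u \<noteq> ?b" "?v \<noteq> ?b"
    using comp_permutes_cancel[OF a] by metis+
  moreover have "b' = ?u \<or> b' = ?v" if b': "b' \<noteq> ?b" "bedge n a b'" "bedge n b' ?c" for b'
  proof -
    obtain p q r t where pqrt: "p \<noteq> q" "r \<noteq> t" "transpose p q \<noteq> transpose r t"
      "b' = transpose p q \<circ> a" "transpose r t \<circ> transpose p q = transpose y z \<circ> transpose x y"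
      by (rule midpointE[OF b'(2,3) refl])
    then show ?thesis using transposition_factor_overlapping[OF d pqrt(1-3,5)] b'(1) by auto
  qed
  ultimately show ?thesis using S_u S_v exclusive by blast
qed

lemma transposes_shared_pointE:
  assumes "p \<noteq> q" "r \<noteq> t" "transpose p q \<noteq> transpose r t" "\<not> distinct [p, q, r, t]"
  obtains x y z where "distinct [x, y, z]" "{x, y, z} = {p, q, r, t}"
    "transpose p q = transpose x y" "transpose r t = transpose y z"
proof -
  have "p = r \<or> p = t \<or> q = r \<or> q = t" using assms(1,2,4) by auto
  then show ?thesis
  proof (elim disjE)
    assume "p = r"
    with assms(1-3) show ?thesis by (intro that[of q p t]) (auto simp: transpose_commute)
  next
    assume "p = t"
    with assms(1-3) show ?thesis by (intro that[of q p r]) (auto simp: transpose_commute)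
  next
    assume "q = r"
    with assms(1-3) show ?thesis by (intro that[of p q t]) (auto simp: transpose_commute)
  next
    assume "q = t"
    with assms(1-3) show ?thesis by (intro that[of p q r]) (auto simp: transpose_commute)
  qed
qed

lemma ex1_flip:
  assumes "bedge n a b" "bedge n b c"
  shows "\<exists>!b'. b' \<noteq> b \<and> bedge n a b' \<and> bedge n b' c"
proof -
  obtain p q r t where pqrt: "p \<noteq> q" "r \<noteq> t" "transpose p q \<noteq> transpose r t"
    "{p, q, r, t} \<subseteq> {1..n}" and b: "b = transpose p q \<circ> a" and c: "c = transpose r t \<circ> b"
    and ord: "in_order (inv a) p q" "in_order (inv b) r t"
    using assms by (rule bedge_bedgeE)
  have a: "a permutes {1..n}" using assms(1) by (simp add: bedge_def)
  have inv_b: "inv b = inv a \<circ> transpose p q"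
    by (simp add: b o_inv_distrib permutes_bij[OF a])
  have inj: "inj (inv a \<circ> transpose p q)" "inj (inv a)"
    using permutes_inj[OF permutes_inv[OF a]] by (auto intro: inj_compose)
  show ?thesis
  proof (cases "distinct [p, q, r, t]")
    case True
    then show ?thesis
      using ex1_flip_disjoint[OF a pqrt(4) True ord(1)] ord(2) b c inv_b by (simp add: comp_assoc)
  next
    case False
    obtain x y z where xyz: "distinct [x, y, z]" "{x, y, z} = {p, q, r, t}"
      "transpose p q = transpose x y" "transpose r t = transpose y z"
      using pqrt(1-3) False by (rule transposes_shared_pointE)
    have "in_order (inv a) x y" "in_order (inv a \<circ> transpose x y) y z"
      using ord inv_b in_order_transpose_cong[OF xyz(3) pqrt(1) inj(2)]
        in_order_transpose_cong[OF xyz(4) pqrt(2) inj(1)] xyz(3) by auto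
    then show ?thesis
      using ex1_flip_overlapping[OF a _ xyz(1)] xyz(2-4) pqrt(4) b c by (simp add: comp_assoc)
  qed
qed

lemma flip_vertex_bedges:
  assumes "bedge n a b" "bedge n b c"
  shows "flip_vertex n a b c \<noteq> b" "bedge n a (flip_vertex n a b c)"
    "bedge n (flip_vertex n a b c) c"
  using theI'[OF ex1_flip[OF assms]] unfolding flip_vertex_def by auto

lemma flip_vertex_eqI:
  assumes "bedge n a b" "bedge n b c" "b' \<noteq> b" "bedge n a b'" "bedge n b' c"
  shows "flip_vertex n a b c = b'"
  unfolding flip_vertex_def using assms by (intro the1_equality[OF ex1_flip]) auto

lemma flip_vertex_flip_vertex:
  assumes "bedge n a b" "bedge n b c"
  shows "flip_vertex n a (flip_vertex n a b c) c = b"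
  using flip_vertex_bedges[OF assms] assms by (intro flip_vertex_eqI) auto

section \<open>Paths and flip operators\<close>

lemma paths_iff:
  "p \<in> paths n h u v \<longleftrightarrow>
     length p = Suc h \<and> p ! 0 = u \<and> p ! h = v \<and> (\<forall>i<h. bedge n (p ! i) (p ! Suc i))"
  by (cases "p = []") (auto simp: paths_def hd_conv_nth last_conv_nth)

lemma flip_op_nth:
  assumes "length p = Suc h" "i < h"
  shows "length (flip_op n i p) = Suc h"
    "k \<le> h \<Longrightarrow> flip_op n i p ! k =
       (if k = i then flip_vertex n (p ! (i - 1)) (p ! i) (p ! Suc i) else p ! k)"
  using assms by (simp_all add: flip_op_def nth_list_update)

lemma flip_op_bedges:
  assumes "p \<in> paths n h u v" "1 \<le> i" "i < h"
  shows "bedge n (p ! (i - 1)) (p ! i)" "bedge n (p ! i) (p ! Suc i)"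
proof -
  have "\<forall>k<h. bedge n (p ! k) (p ! Suc k)" using assms(1) by (simp add: paths_iff)
  then show "bedge n (p ! (i - 1)) (p ! i)" "bedge n (p ! i) (p ! Suc i)"
    using assms(2,3) by (auto dest: spec[of _ "i - 1"] spec[of _ i])
qed

lemma flip_op_paths:
  assumes p: "p \<in> paths n h u v" and i: "1 \<le> i" "i < h"
  shows "flip_op n i p \<in> paths n h u v"
proof -
  have P: "length p = Suc h" "p ! 0 = u" "p ! h = v"
    "\<And>k. k < h \<Longrightarrow> bedge n (p ! k) (p ! Suc k)"
    using p by (auto simp: paths_iff)
  note b' = flip_vertex_bedges[OF flip_op_bedges[OF p i]]
  have "bedge n (flip_op n i p ! k) (flip_op n i p ! Suc k)" if "k < h" for k
    using that i P(4)[OF that] b' by (auto simp: flip_op_nth[OF P(1) i(2)] Suc_pred)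
  then show ?thesis
    using i P by (simp add: paths_iff flip_op_nth[OF P(1) i(2)])
qed

lemma flip_op_flip_op:
  assumes p: "p \<in> paths n h u v" and i: "1 \<le> i" "i < h"
  shows "flip_op n i (flip_op n i p) = p"
  using p i flip_vertex_flip_vertex[OF flip_op_bedges[OF p i]]
  by (simp add: flip_op_def paths_iff)

lemma flip_steps_sym_iff:
  assumes "p \<in> paths n h u v"
  shows "(p, q) \<in> flip_steps n h u v \<union> (flip_steps n h u v)\<inverse> \<longleftrightarrow>
    (\<exists>i. 1 \<le> i \<and> i < h \<and> q = flip_op n i p)"
proof
  assume "(p, q) \<in> flip_steps n h u v \<union> (flip_steps n h u v)\<inverse>"
  then consider "(p, q) \<in> flip_steps n h u v" | "(q, p) \<in> flip_steps n h u v" by blast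
  then show "\<exists>i. 1 \<le> i \<and> i < h \<and> q = flip_op n i p"
  proof cases
    case 2
    then obtain i where "1 \<le> i" "i < h" "q \<in> paths n h u v" "p = flip_op n i q"
      by (auto simp: flip_steps_def)
    then show ?thesis using flip_op_flip_op by metis
  qed (auto simp: flip_steps_def)
qed (use assms in \<open>auto simp: flip_steps_def\<close>)

lemma Gverts_conv_steps:
  assumes "length p = Suc h"
  shows "Gverts p = (\<Union>k<h. supp (p ! Suc k \<circ> inv (p ! k)))"
  using assms by (auto simp: Gverts_def labels_def supp_def)

lemma UN_cong_pair:
  assumes "j \<in> K" "j' \<in> K" "A j \<union> A j' = B j \<union> B j'"
    and "\<And>k. k \<in> K \<Longrightarrow> k \<noteq> j \<Longrightarrow> k \<noteq> j' \<Longrightarrow> A k = B k"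
  shows "(\<Union>k\<in>K. A k) = (\<Union>k\<in>K. B k)"
proof -
  have split: "(\<Union>k\<in>K. C k) = (C j \<union> C j') \<union> (\<Union>k\<in>K - {j, j'}. C k)" for C :: "_ \<Rightarrow> 'b set"
    using assms(1,2) by blast
  have "(\<Union>k\<in>K - {j, j'}. A k) = (\<Union>k\<in>K - {j, j'}. B k)"
    using assms(4) by (intro SUP_cong) auto
  then show ?thesis using split[of A] split[of B] assms(3) by simp
qed

lemma Gverts_flip_op:
  assumes p: "p \<in> paths n h u v" and i: "1 \<le> i" "i < h"
  shows "Gverts (flip_op n i p) = Gverts p"
proof -
  let ?q = "flip_op n i p" and ?b' = "flip_vertex n (p ! (i - 1)) (p ! i) (p ! Suc i)"
  let ?L = "\<lambda>r k. supp (r ! Suc k \<circ> inv (r ! k))"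
  have len: "length p = Suc h" using p by (simp add: paths_iff)
  note e = flip_op_bedges[OF p i] and b' = flip_vertex_bedges[OF flip_op_bedges[OF p i]]
  have "i - 1 \<noteq> i" using i by simp
  then have q_nth: "?q ! (i - 1) = p ! (i - 1)" "?q ! i = ?b'" "?q ! Suc i = p ! Suc i"
    using i by (simp_all add: flip_op_nth[OF len i(2)])
  have "?L ?q (i - 1) \<union> ?L ?q i = ?L p (i - 1) \<union> ?L p i"
    using i q_nth supp_comp_two_bedges[OF e] supp_comp_two_bedges[OF b'(2,3)] by simp
  moreover have "?L ?q k = ?L p k" if "k < h" "k \<noteq> i - 1" "k \<noteq> i" for k
  proof -
    have "Suc k \<noteq> i" using that by auto
    then show ?thesis using that by (simp add: flip_op_nth[OF len i(2)])
  qed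
  ultimately have "(\<Union>k\<in>{..<h}. ?L ?q k) = (\<Union>k\<in>{..<h}. ?L p k)"
    using i by (intro UN_cong_pair[of "i - 1" _ i]) auto
  then show ?thesis
    using len by (simp add: Gverts_conv_steps flip_op_nth(1)[OF len i(2)])
qed

lemma path_step_transpose:
  assumes p: "p \<in> paths n h u v" and k: "k < h"
  obtains \<alpha> \<beta> where "\<alpha> \<noteq> \<beta>" "\<alpha> \<in> Gverts p" "\<beta> \<in> Gverts p"
    "p ! Suc k = transpose \<alpha> \<beta> \<circ> p ! k" "p ! Suc k \<circ> inv (p ! k) = transpose \<alpha> \<beta>"
proof -
  have len: "length p = Suc h" using p by (simp add: paths_iff)
  have "bedge n (p ! k) (p ! Suc k)" using p k by (simp add: paths_iff)
  then obtain \<alpha> \<beta> where ab: "\<alpha> \<noteq> \<beta>" "p ! Suc k = transpose \<alpha> \<beta> \<circ> p ! k"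
    "p ! Suc k \<circ> inv (p ! k) = transpose \<alpha> \<beta>" "supp (p ! Suc k \<circ> inv (p ! k)) = {\<alpha>, \<beta>}"
    by (rule bedge_supp)
  moreover have "supp (p ! Suc k \<circ> inv (p ! k)) \<subseteq> Gverts p"
    using k by (auto simp: Gverts_conv_steps[OF len])
  ultimately show ?thesis using that by blast
qed

lemma finite_Gverts:
  assumes "p \<in> paths n h u v"
  shows "finite (Gverts p)"
proof -
  have "finite (supp (p ! Suc k \<circ> inv (p ! k)))" if k: "k < h" for k
  proof -
    obtain \<alpha> \<beta> where "\<alpha> \<noteq> \<beta>" "\<alpha> \<in> Gverts p" "\<beta> \<in> Gverts p"
      "p ! Suc k = transpose \<alpha> \<beta> \<circ> p ! k" "p ! Suc k \<circ> inv (p ! k) = transpose \<alpha> \<beta>"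
      by (rule path_step_transpose[OF assms k])
    then show ?thesis by (simp add: supp_transpose)
  qed
  then show ?thesis using assms by (simp add: Gverts_conv_steps paths_iff)
qed

lemma path_start_bij_betw:
  assumes "p \<in> paths n h u v"
  shows "bij_betw u (u -` Gverts p) (Gverts p)"
proof (cases "h = 0")
  case True
  then have "Gverts p = {}" using assms by (simp add: Gverts_conv_steps paths_iff)
  then show ?thesis by (simp add: bij_betw_def)
next
  case False
  then have "u permutes {1..n}" using assms by (auto simp: paths_iff bedge_def)
  then have "bij u" by (rule permutes_bij)
  then show ?thesis
    unfolding bij_betw_def
    by (metis bij_def image_vimage_eq inf_top.right_neutral inj_on_subset subset_UNIV surj_def)
qed

lemma path_label_transpose:
  assumes "p \<in> paths n h u v" "t \<in> set (labels p)"
  obtains \<alpha> \<beta> where "\<alpha> < \<beta>" "\<alpha> \<in> Gverts p" "\<beta> \<in> Gverts p" "t = transpose \<alpha> \<beta>"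
proof -
  have len: "length p = Suc h" using assms(1) by (simp add: paths_iff)
  then obtain k where k: "k < h" "t = p ! Suc k \<circ> inv (p ! k)"
    using assms(2) by (auto simp: labels_def)
  obtain \<alpha> \<beta> where "\<alpha> \<noteq> \<beta>" "\<alpha> \<in> Gverts p" "\<beta> \<in> Gverts p" "t = transpose \<alpha> \<beta>"
    using path_step_transpose[OF assms(1) k(1)] k(2) by metis
  then show ?thesis
    using that[of \<alpha> \<beta>] that[of \<beta> \<alpha>] by (cases "\<alpha> < \<beta>") (auto simp: transpose_commute)
qed

lemma flip_orbit_invariants:
  assumes p0: "p0 \<in> paths n h u v"
    and q: "(p0, q) \<in> (flip_steps n h u v \<union> (flip_steps n h u v)\<inverse>)\<^sup>*"
  shows "q \<in> paths n h u v" "Gverts q = Gverts p0"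
proof -
  let ?I = "{q \<in> paths n h u v. Gverts q = Gverts p0}"
  have "(flip_steps n h u v \<union> (flip_steps n h u v)\<inverse>) `` ?I \<subseteq> ?I"
  proof
    fix q assume "q \<in> (flip_steps n h u v \<union> (flip_steps n h u v)\<inverse>) `` ?I"
    then obtain p where p: "p \<in> paths n h u v" "Gverts p = Gverts p0"
      "(p, q) \<in> flip_steps n h u v \<union> (flip_steps n h u v)\<inverse>"
      by blast
    then obtain i where "1 \<le> i" "i < h" "q = flip_op n i p" using flip_steps_sym_iff by blast
    then show "q \<in> ?I" using p flip_op_paths Gverts_flip_op by simp
  qed
  then have "(flip_steps n h u v \<union> (flip_steps n h u v)\<inverse>)\<^sup>* `` ?I = ?I"
    by (rule Image_closed_trancl)
  then show "q \<in> paths n h u v" "Gverts q = Gverts p0" using p0 q by blast+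
qed

lemma flipclassE:
  assumes "flipclass n h F"
  obtains u v p0 where "p0 \<in> paths n h u v" "p0 \<in> F"
    "F \<subseteq> {q \<in> paths n h u v. Gverts q = Gverts p0}"
    "F = {q. (p0, q) \<in> (flip_steps n h u v \<union> (flip_steps n h u v)\<inverse>)\<^sup>*}"
proof -
  obtain u v p0 where p0: "p0 \<in> paths n h u v"
    and F: "F = {q. (p0, q) \<in> (flip_steps n h u v \<union> (flip_steps n h u v)\<inverse>)\<^sup>*}"
    using assms unfolding flipclass_def by blast
  moreover have "F \<subseteq> {q \<in> paths n h u v. Gverts q = Gverts p0}"
    using flip_orbit_invariants[OF p0] F by blast
  ultimately show ?thesis using that by blast
qed

lemma EF_flipclass:
  assumes "p0 \<in> F" "F \<subseteq> {q \<in> paths n h u v. Gverts q = Gverts p0}"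
  shows "EF F = Gverts p0"
  using someI[of "\<lambda>p. p \<in> F", OF assms(1)] assms(2) by (auto simp: EF_def)

section \<open>Irreducible flipclasses\<close>

lemma card_le_Suc_card_edges_if_connected:
  fixes V :: "nat set" and L :: "(nat \<Rightarrow> nat) set"
  assumes "finite V" "finite L"
    and conn: "\<forall>a\<in>V. \<forall>b\<in>V. (a, b) \<in> {(x, y). x \<noteq> y \<and> transpose x y \<in> L}\<^sup>*"
  shows "card V \<le> Suc (card L)"
proof (cases "V = {}")
  case False
  then obtain a0 where a0: "a0 \<in> V" by blast
  define R where "R = {(x, y). x \<noteq> y \<and> transpose x y \<in> L}"
  define dist where "dist b = (LEAST k. (a0, b) \<in> R ^^ k)" for b
  \<comment> \<open>Every vertex other than a0 is entered by an edge from a vertex closer to a0; these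
      edges are pairwise distinct, as in a breadth-first spanning tree.\<close>
  have "\<exists>c. (c, b) \<in> R \<and> dist c < dist b" if b: "b \<in> V - {a0}" for b
  proof -
    have "(a0, b) \<in> R\<^sup>*" using conn a0 b unfolding R_def by blast
    then obtain k where "(a0, b) \<in> R ^^ k" using rtrancl_power by blast
    then have reach: "(a0, b) \<in> R ^^ dist b" unfolding dist_def by (rule LeastI)
    have "dist b \<noteq> 0"
    proof
      assume "dist b = 0"
      then show False using reach b by simp
    qed
    then obtain k where k: "dist b = Suc k" using not0_implies_Suc by blast
    then obtain c where "(a0, c) \<in> R ^^ k" "(c, b) \<in> R" using reach by (auto elim: relpow_Suc_E)
    moreover have "dist c \<le> k" unfolding dist_def using calculation(1) by (rule Least_le)
    ultimately show ?thesis using k by auto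
  qed
  then obtain parent
    where parent: "\<And>b. b \<in> V - {a0} \<Longrightarrow> (parent b, b) \<in> R \<and> dist (parent b) < dist b"
    using bchoice[of "V - {a0}" "\<lambda>b c. (c, b) \<in> R \<and> dist c < dist b"] by blast
  have "inj_on (\<lambda>b. transpose (parent b) b) (V - {a0})"
  proof (rule inj_onI)
    fix b1 b2 assume b: "b1 \<in> V - {a0}" "b2 \<in> V - {a0}"
      and "transpose (parent b1) b1 = transpose (parent b2) b2"
    moreover have "parent b1 \<noteq> b1" using parent[OF b(1)] by (simp add: R_def)
    ultimately have "(parent b1 = parent b2 \<and> b1 = b2) \<or> (parent b1 = b2 \<and> b1 = parent b2)"
      by (simp add: transpose_eq_transpose_iff)
    then show "b1 = b2" using parent[OF b(1)] parent[OF b(2)] by auto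
  qed
  moreover have "(\<lambda>b. transpose (parent b) b) ` (V - {a0}) \<subseteq> L"
    using parent by (auto simp: R_def)
  ultimately have "card (V - {a0}) \<le> card L" using assms(2) by (rule card_inj_on_le)
  then show ?thesis using assms(1) a0 by (simp add: card_Diff_singleton)
qed simp

lemma card_Gverts_le_if_Gconnected:
  assumes "p \<in> paths n h u v" "Gconnected p"
  shows "card (Gverts p) \<le> Suc h"
proof -
  have "card (Gverts p) \<le> Suc (card (set (labels p)))"
    using assms finite_Gverts
    by (intro card_le_Suc_card_edges_if_connected) (auto simp: Gconnected_def)
  also have "card (set (labels p)) \<le> h"
    using card_length[of "labels p"] assms(1) by (simp add: labels_def paths_iff)
  finally show ?thesis by simp
qed

lemma irreducible_card_EF_le:
  assumes F: "flipclass n h F" and "irreducible_fc F"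
  shows "card (EF F) \<le> Suc h"
proof -
  obtain u v p0 where p0: "p0 \<in> paths n h u v" "p0 \<in> F"
    and F_sub: "F \<subseteq> {q \<in> paths n h u v. Gverts q = Gverts p0}"
    using F by (rule flipclassE)
  obtain p where "p \<in> F" "Gconnected p" using assms(2) by (auto simp: irreducible_fc_def)
  then show ?thesis
    using card_Gverts_le_if_Gconnected F_sub EF_flipclass[OF p0(2) F_sub] by force
qed

section \<open>Standardization\<close>

definition rank :: "nat set \<Rightarrow> nat \<Rightarrow> nat" where
  "rank S a = Suc (card {b \<in> S. b < a})"

definition unrank :: "nat set \<Rightarrow> nat \<Rightarrow> nat" where
  "unrank S = the_inv_into S (rank S)"

lemma rank_less_rank:
  assumes "finite S" "a \<in> S" "a' \<in> S" "a < a'"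
  shows "rank S a < rank S a'"
proof -
  have "{b \<in> S. b < a} \<subset> {b \<in> S. b < a'}" using assms by auto
  then show ?thesis using assms(1) by (simp add: rank_def psubset_card_mono)
qed

lemma rank_less_rank_iff:
  assumes "finite S" "a \<in> S" "a' \<in> S"
  shows "rank S a < rank S a' \<longleftrightarrow> a < a'"
  using rank_less_rank[OF assms] rank_less_rank[OF assms(1,3,2)]
  by (cases a a' rule: linorder_cases) auto

lemma inj_on_rank:
  assumes "finite S"
  shows "inj_on (rank S) S"
proof (rule inj_onI)
  fix a a' assume a: "a \<in> S" "a' \<in> S" and "rank S a = rank S a'"
  then have "\<not> a < a'" "\<not> a' < a"
    using rank_less_rank_iff[OF assms a] rank_less_rank_iff[OF assms a(2,1)] by auto
  then show "a = a'" by simp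
qed

lemma bij_betw_rank:
  assumes "finite S"
  shows "bij_betw (rank S) S {1..card S}"
proof -
  have "card {b \<in> S. b < a} < card S" if "a \<in> S" for a
    using that assms by (intro psubset_card_mono) auto
  then have "rank S ` S \<subseteq> {1..card S}" by (auto simp: rank_def Suc_le_eq)
  moreover have "card (rank S ` S) = card {1..card S}"
    using card_image[OF inj_on_rank[OF assms]] by simp
  ultimately have "rank S ` S = {1..card S}" by (intro card_subset_eq) auto
  then show ?thesis using inj_on_rank[OF assms] by (simp add: bij_betw_def)
qed

lemma bij_betw_unrank: "finite S \<Longrightarrow> bij_betw (unrank S) {1..card S} S"
  unfolding unrank_def by (rule bij_betw_the_inv_into[OF bij_betw_rank])

lemma rank_unrank: "finite S \<Longrightarrow> j \<in> {1..card S} \<Longrightarrow> rank S (unrank S j) = j"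
  unfolding unrank_def by (rule f_the_inv_into_f_bij_betw[OF bij_betw_rank]) auto

lemma unrank_rank: "finite S \<Longrightarrow> a \<in> S \<Longrightarrow> unrank S (rank S a) = a"
  unfolding unrank_def by (rule the_inv_into_f_f[OF inj_on_rank])

lemma rank_transpose:
  assumes "finite S" "\<alpha> \<in> S" "\<beta> \<in> S" "c \<in> S"
  shows "rank S (transpose \<alpha> \<beta> c) = transpose (rank S \<alpha>) (rank S \<beta>) (rank S c)"
proof -
  have "rank S c = rank S \<alpha> \<longleftrightarrow> c = \<alpha>" "rank S c = rank S \<beta> \<longleftrightarrow> c = \<beta>"
    using inj_on_eq_iff[OF inj_on_rank[OF assms(1)]] assms(2-4) by blast+
  then show ?thesis by (auto simp: transpose_def)
qed

definition perm_coset :: "nat set \<Rightarrow> (nat \<Rightarrow> nat) \<Rightarrow> (nat \<Rightarrow> nat) set" where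
  "perm_coset E u = {\<sigma> \<circ> u | \<sigma>. \<sigma> permutes E}"

lemma transpose_comp_perm_coset:
  assumes "x \<in> perm_coset E u" "\<alpha> \<in> E" "\<beta> \<in> E"
  shows "transpose \<alpha> \<beta> \<circ> x \<in> perm_coset E u"
proof -
  obtain \<sigma> where "\<sigma> permutes E" "x = \<sigma> \<circ> u" using assms(1) by (auto simp: perm_coset_def)
  then have "transpose \<alpha> \<beta> \<circ> \<sigma> permutes E"
    using assms(2,3) by (intro permutes_compose permutes_swap_id)
  moreover have "transpose \<alpha> \<beta> \<circ> x = (transpose \<alpha> \<beta> \<circ> \<sigma>) \<circ> u"
    using \<open>x = \<sigma> \<circ> u\<close> by (simp add: comp_assoc)
  ultimately show ?thesis unfolding perm_coset_def by blast
qed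

lemma path_nth_in_perm_coset:
  assumes p: "p \<in> paths n h u v" and "k \<le> h"
  shows "p ! k \<in> perm_coset (Gverts p) u"
  using \<open>k \<le> h\<close>
proof (induction k)
  case 0
  have "p ! 0 = u" using p by (simp add: paths_iff)
  then show ?case by (auto simp: perm_coset_def intro!: exI[of _ id])
next
  case (Suc k)
  then have "k < h" by simp
  obtain \<alpha> \<beta> where ab: "\<alpha> \<noteq> \<beta>" "\<alpha> \<in> Gverts p" "\<beta> \<in> Gverts p"
    "p ! Suc k = transpose \<alpha> \<beta> \<circ> p ! k" "p ! Suc k \<circ> inv (p ! k) = transpose \<alpha> \<beta>"
    by (rule path_step_transpose[OF p \<open>k < h\<close>])
  have "p ! k \<in> perm_coset (Gverts p) u" using Suc by simp
  then have "transpose \<alpha> \<beta> \<circ> p ! k \<in> perm_coset (Gverts p) u"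
    using ab(2,3) by (rule transpose_comp_perm_coset)
  then show ?case by (simp only: ab(4))
qed

lemma path_in_perm_coset:
  assumes "p \<in> paths n h u v" "x \<in> set p"
  shows "x \<in> perm_coset (Gverts p) u"
  using assms path_nth_in_perm_coset[OF assms(1)]
  by (auto simp: in_set_conv_nth paths_iff less_Suc_eq_le)

text \<open>The relabelling of the paper: positions in \<open>u -` E\<close> and values in \<open>E\<close> are both replaced
  by their ranks, so that a permutation that differs from \<open>u\<close> only on \<open>E\<close> becomes a permutation of
  \<open>{1..card E}\<close>; outside this interval the result is the identity.\<close>

definition standardize :: "nat set \<Rightarrow> (nat \<Rightarrow> nat) \<Rightarrow> (nat \<Rightarrow> nat) \<Rightarrow> nat \<Rightarrow> nat" where
  "standardize E u x = (\<lambda>j. if j \<in> {1..card E} then rank E (x (unrank (u -` E) j)) else j)"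

text \<open>Only the restriction of \<open>u\<close> to \<open>u -` E\<close> is assumed bijective: for \<open>h = 0\<close> the
  single vertex of a path need not be a permutation.\<close>

locale standardization =
  fixes E :: "nat set" and u :: "nat \<Rightarrow> nat" and m :: nat
  assumes finite_E: "finite E" and bij_betw_u: "bij_betw u (u -` E) E" and card_le: "card E \<le> m"
begin

abbreviation std :: "(nat \<Rightarrow> nat) \<Rightarrow> nat \<Rightarrow> nat" where
  "std \<equiv> standardize E u"

lemma finite_positions: "finite (u -` E)"
  using bij_betw_u finite_E bij_betw_finite by blast

lemma card_positions: "card (u -` E) = card E"
  using bij_betw_u bij_betw_same_card by blast

lemma perm_cosetE:
  assumes "x \<in> perm_coset E u"
  obtains \<sigma> where "\<sigma> permutes E" "x = \<sigma> \<circ> u"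
  using assms by (auto simp: perm_coset_def)

lemma perm_coset_bij_betw:
  assumes "x \<in> perm_coset E u"
  shows "bij_betw x (u -` E) E"
proof -
  obtain \<sigma> where "\<sigma> permutes E" "x = \<sigma> \<circ> u" using assms by (rule perm_cosetE)
  then show ?thesis using bij_betw_trans[OF bij_betw_u permutes_imp_bij] by blast
qed

lemma perm_coset_outside:
  assumes "x \<in> perm_coset E u" "k \<notin> u -` E"
  shows "x k = u k"
proof -
  obtain \<sigma> where "\<sigma> permutes E" "x = \<sigma> \<circ> u" using assms(1) by (rule perm_cosetE)
  then show ?thesis using assms(2) permutes_not_in by fastforce
qed

lemma standardize_permutes:
  assumes x: "x \<in> perm_coset E u"
  shows "std x permutes {1..m}"
proof -
  have "bij_betw (rank E \<circ> x \<circ> unrank (u -` E)) {1..card E} {1..card E}"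
    using bij_betw_unrank[OF finite_positions] perm_coset_bij_betw[OF x] bij_betw_rank[OF finite_E]
    by (auto simp: card_positions intro: bij_betw_trans)
  then have "bij_betw (std x) {1..card E} {1..card E}"
    by (rule bij_betw_cong[THEN iffD1, rotated]) (simp add: standardize_def)
  then have "std x permutes {1..card E}"
    by (rule bij_imp_permutes) (simp add: standardize_def del: atLeastAtMost_iff)
  then show ?thesis by (rule permutes_subset) (use card_le in auto)
qed

lemma inj_on_standardize: "inj_on std (perm_coset E u)"
proof (rule inj_onI)
  fix x y assume x: "x \<in> perm_coset E u" and y: "y \<in> perm_coset E u" and "std x = std y"
  show "x = y"
  proof
    fix k
    show "x k = y k"
    proof (cases "k \<in> u -` E")
      case True
      let ?j = "rank (u -` E) k"
      have "?j \<in> {1..card E}"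
        using bij_betw_rank[OF finite_positions] True by (auto simp: card_positions bij_betw_def)
      then have "rank E (x k) = rank E (y k)"
        using fun_cong[OF \<open>std x = std y\<close>, of ?j] True
        by (simp add: standardize_def unrank_rank[OF finite_positions])
      then show ?thesis
        using inj_on_rank[OF finite_E] True perm_coset_bij_betw[OF x] perm_coset_bij_betw[OF y]
        by (meson bij_betwE inj_onD)
    next
      case False
      then show ?thesis using perm_coset_outside[OF x] perm_coset_outside[OF y] by simp
    qed
  qed
qed

lemma standardize_transpose_comp:
  assumes x: "x \<in> perm_coset E u" and ab: "\<alpha> \<in> E" "\<beta> \<in> E"
  shows "std (transpose \<alpha> \<beta> \<circ> x) = transpose (rank E \<alpha>) (rank E \<beta>) \<circ> std x"
proof
  fix j
  have ranks: "rank E \<alpha> \<in> {1..card E}" "rank E \<beta> \<in> {1..card E}"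
    using bij_betw_rank[OF finite_E] ab by (auto simp: bij_betw_def)
  show "std (transpose \<alpha> \<beta> \<circ> x) j = (transpose (rank E \<alpha>) (rank E \<beta>) \<circ> std x) j"
  proof (cases "j \<in> {1..card E}")
    case True
    then have "unrank (u -` E) j \<in> u -` E"
      using bij_betwE[OF bij_betw_unrank[OF finite_positions]] by (simp add: card_positions)
    then have "x (unrank (u -` E) j) \<in> E"
      using bij_betwE[OF perm_coset_bij_betw[OF x]] by blast
    then show ?thesis using True rank_transpose[OF finite_E ab] by (simp add: standardize_def)
  next
    case False
    then show ?thesis using ranks by (auto simp: standardize_def transpose_def)
  qed
qed

lemma inv_in_positions:
  assumes x: "x \<in> perm_coset E u" "bij x" and a: "a \<in> E"
  shows "inv x a \<in> u -` E"
proof (rule ccontr)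
  assume "inv x a \<notin> u -` E"
  then have "u (inv x a) \<notin> E" and "x (inv x a) = u (inv x a)"
    using perm_coset_outside[OF x(1)] by auto
  moreover have "x (inv x a) = a" using x(2) by (simp add: bij_is_surj surj_f_inv_f)
  ultimately show False using a by simp
qed

lemma inv_standardize_rank:
  assumes x: "x \<in> perm_coset E u" "bij x" and a: "a \<in> E"
  shows "inv (std x) (rank E a) = rank (u -` E) (inv x a)"
proof -
  let ?k = "inv x a"
  have xk: "x ?k = a" using x(2) by (simp add: bij_is_surj surj_f_inv_f)
  have k: "?k \<in> u -` E" by (rule inv_in_positions[OF x a])
  have "rank (u -` E) ?k \<in> {1..card E}"
    using bij_betwE[OF bij_betw_rank[OF finite_positions]] k by (simp add: card_positions)
  then have "std x (rank (u -` E) ?k) = rank E a"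
    using xk by (simp add: standardize_def unrank_rank[OF finite_positions k])
  then show ?thesis by (simp add: permutes_inv_eq[OF standardize_permutes[OF x(1)]])
qed

lemma in_order_standardize:
  assumes x: "x \<in> perm_coset E u" "bij x" and ab: "\<alpha> \<in> E" "\<beta> \<in> E"
  shows "in_order (inv (std x)) (rank E \<alpha>) (rank E \<beta>) \<longleftrightarrow> in_order (inv x) \<alpha> \<beta>"
proof -
  have "inv x \<alpha> \<in> u -` E" "inv x \<beta> \<in> u -` E"
    using inv_in_positions[OF x] ab by auto
  then show ?thesis
    unfolding in_order_def inv_standardize_rank[OF x ab(1)] inv_standardize_rank[OF x ab(2)]
    by (simp add: rank_less_rank_iff finite_E finite_positions ab)
qed

lemma bedge_standardize:
  assumes x: "x \<in> perm_coset E u" and e: "bedge n x (transpose \<alpha> \<beta> \<circ> x)" "\<alpha> \<noteq> \<beta>"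
    and ab: "\<alpha> \<in> E" "\<beta> \<in> E"
  shows "bedge m (std x) (std (transpose \<alpha> \<beta> \<circ> x))"
proof -
  have xn: "x permutes {1..n}" using e(1) by (simp add: bedge_def)
  have "transpose \<alpha> \<beta> permutes {1..n}"
    using permutes_compose[OF permutes_inv[OF xn], of "transpose \<alpha> \<beta> \<circ> x"] e(1)
    by (simp add: bedge_def comp_assoc permutes_inv_o[OF xn])
  then have "\<alpha> \<in> {1..n}" "\<beta> \<in> {1..n}"
    using e(2) permutes_not_in[of "transpose \<alpha> \<beta>" "{1..n}"] by fastforce+
  then have "in_order (inv x) \<alpha> \<beta>" using e bedge_transpose_iff[OF xn] by blast
  moreover have "rank E \<alpha> \<noteq> rank E \<beta>" "rank E \<alpha> \<in> {1..m}" "rank E \<beta> \<in> {1..m}"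
    using e(2) ab inj_on_eq_iff[OF inj_on_rank[OF finite_E]]
      bij_betwE[OF bij_betw_rank[OF finite_E]] card_le
    by fastforce+
  ultimately show ?thesis
    unfolding standardize_transpose_comp[OF x ab]
    using bedge_transpose_iff[OF standardize_permutes[OF x]]
      in_order_standardize[OF x permutes_bij[OF xn] ab]
    by blast
qed

end

lemma standardize_id_transpose:
  assumes "finite E" "\<alpha> \<in> E" "\<beta> \<in> E"
  shows "standardize E id (transpose \<alpha> \<beta>) = transpose (rank E \<alpha>) (rank E \<beta>)"
proof -
  interpret standardization E id "card E"
    using assms(1) by unfold_locales simp_all
  have "id \<in> perm_coset E id" by (auto simp: perm_coset_def intro!: exI[of _ id])
  moreover have "standardize E id id = id"
    by (auto simp: fun_eq_iff standardize_def rank_unrank[OF assms(1)])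
  ultimately show ?thesis using standardize_transpose_comp[of id \<alpha> \<beta>] assms(2,3) by simp
qed

lemma image_rtrancl_simulation:
  assumes x0: "x0 \<in> I"
    and step_forth: "\<And>x y. x \<in> I \<Longrightarrow> (x, y) \<in> R \<Longrightarrow> y \<in> I \<and> (f x, f y) \<in> R'"
    and step_back: "\<And>x y'. x \<in> I \<Longrightarrow> (f x, y') \<in> R' \<Longrightarrow> \<exists>y. (x, y) \<in> R \<and> y' = f y"
  shows "f ` {y. (x0, y) \<in> R\<^sup>*} = {y'. (f x0, y') \<in> R'\<^sup>*}"
proof -
  have forth_star: "y \<in> I \<and> (f x0, f y) \<in> R'\<^sup>*" if "(x0, y) \<in> R\<^sup>*" for y
    using that by induction (use x0 step_forth in \<open>auto intro: rtrancl_into_rtrancl\<close>)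
  have "\<exists>y. (x0, y) \<in> R\<^sup>* \<and> y' = f y" if "(f x0, y') \<in> R'\<^sup>*" for y'
    using that
  proof induction
    case (step y' z')
    then obtain y where y: "(x0, y) \<in> R\<^sup>*" "y' = f y" by blast
    with step.hyps(2) obtain z where "(y, z) \<in> R" "z' = f z"
      using step_back forth_star by blast
    with y show ?case by (blast intro: rtrancl_into_rtrancl)
  qed blast
  then show ?thesis using forth_star by blast
qed

lemma tlex_less_transpose_iff:
  assumes "\<alpha> < \<beta>" "\<gamma> < \<delta>"
  shows "tlex_less (transpose \<alpha> \<beta>) (transpose \<gamma> \<delta>) \<longleftrightarrow> \<alpha> < \<gamma> \<or> (\<alpha> = \<gamma> \<and> \<beta> < \<delta>)"
proof -
  have "tpair (transpose a b) = (a, b)" if "a < b" for a b :: nat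
  proof -
    have "{c. transpose a b c \<noteq> c} = {a, b}" using that by (auto simp: transpose_def)
    then show ?thesis using that by (simp add: tpair_def)
  qed
  then show ?thesis using assms by (simp add: tlex_less_def)
qed

context standardization
begin

lemma map_standardize_paths:
  assumes q: "q \<in> paths n h u v" "Gverts q = E"
  shows "map std q \<in> paths m h (std u) (std v)"
proof -
  have q_nth: "length q = Suc h" "q ! 0 = u" "q ! h = v" using q(1) by (auto simp: paths_iff)
  have "bedge m (std (q ! k)) (std (q ! Suc k))" if k: "k < h" for k
  proof -
    obtain \<alpha> \<beta> where ab: "\<alpha> \<noteq> \<beta>" "\<alpha> \<in> E" "\<beta> \<in> E" "q ! Suc k = transpose \<alpha> \<beta> \<circ> q ! k"
      using path_step_transpose[OF q(1) k] q(2) by metis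
    have "q ! k \<in> perm_coset E u" using path_nth_in_perm_coset[OF q(1)] q(2) k by simp
    moreover have "bedge n (q ! k) (q ! Suc k)" using q(1) k by (simp add: paths_iff)
    ultimately show ?thesis using bedge_standardize ab by simp
  qed
  then show ?thesis using q_nth by (simp add: paths_iff)
qed

lemma map_standardize_flip_op:
  assumes q: "q \<in> paths n h u v" "Gverts q = E" and i: "1 \<le> i" "i < h"
  shows "map std (flip_op n i q) = flip_op m i (map std q)"
proof -
  let ?q' = "flip_op n i q" and ?b' = "flip_vertex n (q ! (i - 1)) (q ! i) (q ! Suc i)"
  have len: "length q = Suc h" using q(1) by (simp add: paths_iff)
  have q': "?q' \<in> paths n h u v" "Gverts ?q' = E"
    using flip_op_paths[OF q(1) i] Gverts_flip_op[OF q(1) i] q(2) by auto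
  have "i - 1 \<noteq> i" using i by simp
  then have q'_nth: "?q' ! (i - 1) = q ! (i - 1)" "?q' ! i = ?b'" "?q' ! Suc i = q ! Suc i"
    using i by (simp_all add: flip_op_nth[OF len i(2)])
  have edges: "bedge m (std (r ! (i - 1))) (std (r ! i))" "bedge m (std (r ! i)) (std (r ! Suc i))"
    if "r \<in> paths n h u v" "Gverts r = E" for r
    using flip_op_bedges[OF map_standardize_paths[OF that] i] that i by (simp_all add: paths_iff)
  have "?b' \<in> perm_coset E u" "q ! i \<in> perm_coset E u"
    using path_nth_in_perm_coset[OF q'(1), of i] path_nth_in_perm_coset[OF q(1), of i]
      q(2) q'(2) q'_nth i
    by simp_all
  then have "std ?b' \<noteq> std (q ! i)"
    using flip_vertex_bedges(1)[OF flip_op_bedges[OF q(1) i]] inj_on_standardize by (auto dest: inj_onD)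
  then have "flip_vertex m (std (q ! (i - 1))) (std (q ! i)) (std (q ! Suc i)) = std ?b'"
    using edges[OF q] edges[OF q'] q'_nth by (intro flip_vertex_eqI) simp_all
  then show ?thesis
    using i len by (simp add: flip_op_def map_update)
qed

lemma labels_map_standardize:
  assumes q: "q \<in> paths n h u v" "Gverts q = E"
  shows "labels (map std q) = map (standardize E id) (labels q)"
proof (rule nth_equalityI)
  have len: "length q = Suc h" using q(1) by (simp add: paths_iff)
  then show "length (labels (map std q)) = length (map (standardize E id) (labels q))"
    by (simp add: labels_def)
  fix k assume "k < length (labels (map std q))"
  then have k: "k < h" using len by (simp add: labels_def)
  obtain \<alpha> \<beta> where ab: "\<alpha> \<noteq> \<beta>" "\<alpha> \<in> E" "\<beta> \<in> E" "q ! Suc k = transpose \<alpha> \<beta> \<circ> q ! k"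
    "q ! Suc k \<circ> inv (q ! k) = transpose \<alpha> \<beta>"
    using path_step_transpose[OF q(1) k] q(2) by metis
  have x: "q ! k \<in> perm_coset E u" using path_nth_in_perm_coset[OF q(1)] q(2) k by simp
  have "std (q ! Suc k) \<circ> inv (std (q ! k)) = transpose (rank E \<alpha>) (rank E \<beta>)"
    unfolding ab(4) standardize_transpose_comp[OF x ab(2,3)]
    by (simp add: comp_assoc permutes_inv_o[OF standardize_permutes[OF x]])
  then show "labels (map std q) ! k = map (standardize E id) (labels q) ! k"
    using k len ab(2,3,5) by (simp add: labels_def standardize_id_transpose[OF finite_E])
qed

lemma flip_orbit_standardize:
  assumes p0: "p0 \<in> paths n h u v" "Gverts p0 = E"
  shows "map std ` {q. (p0, q) \<in> (flip_steps n h u v \<union> (flip_steps n h u v)\<inverse>)\<^sup>*} =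
    {q'. (map std p0, q') \<in> (flip_steps m h (std u) (std v) \<union> (flip_steps m h (std u) (std v))\<inverse>)\<^sup>*}"
proof (rule image_rtrancl_simulation[where I = "{q \<in> paths n h u v. Gverts q = E}"])
  fix x y assume x: "x \<in> {q \<in> paths n h u v. Gverts q = E}"
    and "(x, y) \<in> flip_steps n h u v \<union> (flip_steps n h u v)\<inverse>"
  then obtain i where i: "1 \<le> i" "i < h" "y = flip_op n i x"
    using flip_steps_sym_iff by blast
  from x have x': "x \<in> paths n h u v" "Gverts x = E" by auto
  have "(map std x, map std y) \<in> flip_steps m h (std u) (std v) \<union> (flip_steps m h (std u) (std v))\<inverse>"
    unfolding flip_steps_sym_iff[OF map_standardize_paths[OF x']]
    using i map_standardize_flip_op[OF x' i(1,2)] by auto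
  then show "y \<in> {q \<in> paths n h u v. Gverts q = E} \<and>
    (map std x, map std y) \<in> flip_steps m h (std u) (std v) \<union> (flip_steps m h (std u) (std v))\<inverse>"
    using i x' flip_op_paths Gverts_flip_op by auto
next
  fix x y' assume x: "x \<in> {q \<in> paths n h u v. Gverts q = E}"
    and "(map std x, y') \<in> flip_steps m h (std u) (std v) \<union> (flip_steps m h (std u) (std v))\<inverse>"
  then obtain i where i: "1 \<le> i" "i < h" "y' = flip_op m i (map std x)"
    using flip_steps_sym_iff[OF map_standardize_paths] by blast
  then show "\<exists>y. (x, y) \<in> flip_steps n h u v \<union> (flip_steps n h u v)\<inverse> \<and> y' = map std y"
    using x map_standardize_flip_op flip_steps_sym_iff by auto
qed (use p0 in simp)

lemma standardize_id_label:
  assumes "q \<in> paths n h u v" "Gverts q = E" "t \<in> set (labels q)"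
  obtains \<alpha> \<beta> where "\<alpha> < \<beta>" "\<alpha> \<in> E" "\<beta> \<in> E" "t = transpose \<alpha> \<beta>"
    "rank E \<alpha> < rank E \<beta>" "standardize E id t = transpose (rank E \<alpha>) (rank E \<beta>)"
proof -
  obtain \<alpha> \<beta> where "\<alpha> < \<beta>" "\<alpha> \<in> E" "\<beta> \<in> E" "t = transpose \<alpha> \<beta>"
    using path_label_transpose[OF assms(1,3)] assms(2) by blast
  then show ?thesis
    by (intro that[of \<alpha> \<beta>]) (simp_all add: rank_less_rank finite_E standardize_id_transpose)
qed

lemma fc_iso_standardize:
  assumes F: "F \<subseteq> {q \<in> paths n h u v. Gverts q = E}"
  shows "fc_iso n m h F (map std ` F)"
proof -
  let ?g = "standardize E id"
  have verts: "fc_verts F \<subseteq> perm_coset E u"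
    using F path_in_perm_coset by (fastforce simp: fc_verts_def)
  have bij_verts: "bij_betw std (fc_verts F) (fc_verts (map std ` F))"
    using inj_on_subset[OF inj_on_standardize verts] by (auto simp: bij_betw_def fc_verts_def)
  have "inj_on (map std) F"
  proof (rule inj_onI)
    fix x y assume "x \<in> F" "y \<in> F" and eq: "map std x = map std y"
    then have "set x \<union> set y \<subseteq> perm_coset E u" using verts by (auto simp: fc_verts_def)
    then show "x = y" using map_inj_on[OF eq] inj_on_subset[OF inj_on_standardize] by blast
  qed
  then have bij_paths: "bij_betw (map std) F (map std ` F)" by (rule inj_on_imp_bij_betw)
  have flips: "\<forall>p \<in> F. \<forall>i. 1 \<le> i \<and> i < h \<longrightarrow> map std (flip_op n i p) = flip_op m i (map std p)"
    using F map_standardize_flip_op by auto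
  have labels: "\<forall>p \<in> F. labels (map std p) = map ?g (labels p)"
    using F labels_map_standardize by auto
  have label_cases: "\<exists>\<alpha> \<beta>. \<alpha> < \<beta> \<and> \<alpha> \<in> E \<and> \<beta> \<in> E \<and> t = transpose \<alpha> \<beta> \<and>
      rank E \<alpha> < rank E \<beta> \<and> ?g t = transpose (rank E \<alpha>) (rank E \<beta>)" if t: "t \<in> fc_labels F" for t
  proof -
    obtain p where "p \<in> F" "t \<in> set (labels p)" using t by (auto simp: fc_labels_def)
    then obtain \<alpha> \<beta> where "\<alpha> < \<beta>" "\<alpha> \<in> E" "\<beta> \<in> E" "t = transpose \<alpha> \<beta>"
      "rank E \<alpha> < rank E \<beta>" "?g t = transpose (rank E \<alpha>) (rank E \<beta>)"
      using F standardize_id_label by blast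
    then show ?thesis by blast
  qed
  have rank_eq_iff: "rank E \<alpha> = rank E \<beta> \<longleftrightarrow> \<alpha> = \<beta>" if "\<alpha> \<in> E" "\<beta> \<in> E" for \<alpha> \<beta>
    using inj_on_eq_iff[OF inj_on_rank[OF finite_E] that] .
  have "inj_on ?g (fc_labels F)"
  proof (rule inj_onI)
    fix t s assume "t \<in> fc_labels F" "s \<in> fc_labels F" and eq: "?g t = ?g s"
    then obtain \<alpha> \<beta> \<gamma> \<delta> where
      t: "\<alpha> \<in> E" "\<beta> \<in> E" "t = transpose \<alpha> \<beta>" "rank E \<alpha> < rank E \<beta>"
        "?g t = transpose (rank E \<alpha>) (rank E \<beta>)" and
      s: "\<gamma> \<in> E" "\<delta> \<in> E" "s = transpose \<gamma> \<delta>" "rank E \<gamma> < rank E \<delta>"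
        "?g s = transpose (rank E \<gamma>) (rank E \<delta>)"
      using label_cases by meson
    have "rank E \<alpha> = rank E \<gamma> \<and> rank E \<beta> = rank E \<delta>"
      using eq t(4,5) s(4,5) transpose_eq_transpose_iff[of "rank E \<alpha>" "rank E \<beta>"] by auto
    then show "t = s" using t s rank_eq_iff by simp
  qed
  then have bij_labels: "bij_betw ?g (fc_labels F) (fc_labels (map std ` F))"
    using labels by (auto simp: bij_betw_def fc_labels_def)
  have "tlex_less (?g t) (?g s)"
    if ts: "t \<in> fc_labels F" "s \<in> fc_labels F" and less: "tlex_less t s" for t s
  proof -
    obtain \<alpha> \<beta> \<gamma> \<delta> where
      t: "\<alpha> < \<beta>" "\<alpha> \<in> E" "\<beta> \<in> E" "t = transpose \<alpha> \<beta>" "rank E \<alpha> < rank E \<beta>"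
        "?g t = transpose (rank E \<alpha>) (rank E \<beta>)" and
      s: "\<gamma> < \<delta>" "\<gamma> \<in> E" "\<delta> \<in> E" "s = transpose \<gamma> \<delta>" "rank E \<gamma> < rank E \<delta>"
        "?g s = transpose (rank E \<gamma>) (rank E \<delta>)"
      using label_cases ts by meson
    then show ?thesis
      using less by (simp add: tlex_less_transpose_iff rank_less_rank_iff[OF finite_E] rank_eq_iff)
  qed
  then show ?thesis
    unfolding fc_iso_def using bij_verts bij_paths flips bij_labels labels by blast
qed

end

lemma flipclass_iso_of_card_EF_le:
  assumes F: "flipclass n h F" and m: "card (EF F) \<le> m"
  shows "\<exists>F'. flipclass m h F' \<and> fc_iso n m h F F'"
proof -
  obtain u v p0 where p0: "p0 \<in> paths n h u v" "p0 \<in> F"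
    and F_sub: "F \<subseteq> {q \<in> paths n h u v. Gverts q = Gverts p0}"
    and F_eq: "F = {q. (p0, q) \<in> (flip_steps n h u v \<union> (flip_steps n h u v)\<inverse>)\<^sup>*}"
    using F by (rule flipclassE)
  interpret standardization "Gverts p0" u m
    using finite_Gverts[OF p0(1)] path_start_bij_betw[OF p0(1)] m EF_flipclass[OF p0(2) F_sub]
    by unfold_locales simp_all
  have "flipclass m h (map std ` F)"
    unfolding flipclass_def F_eq flip_orbit_standardize[OF p0(1) refl]
    using map_standardize_paths[OF p0(1) refl] by blast
  then show ?thesis using fc_iso_standardize[OF F_sub] by blast
qed

theorem theorem6p12:
  fixes n h :: nat and F :: "(nat \<Rightarrow> nat) list set"
  assumes "flipclass n h F"
  shows "(\<exists>F'. flipclass (card (EF F)) h F' \<and> fc_iso n (card (EF F)) h F F') \<and>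
         (irreducible_fc F \<longrightarrow> (\<exists>F'. flipclass (Suc h) h F' \<and> fc_iso n (Suc h) h F F'))"
  using flipclass_iso_of_card_EF_le[OF assms order_refl]
    flipclass_iso_of_card_EF_le[OF assms irreducible_card_EF_le[OF assms]] by blast

end
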